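(* Consider the setting described in the context. Suppose that: (i) $\frac{1}{n} \sum_{i=1}^{n} \lVert Q^*(x^i)\rVert^4 \xrightarrow{p} \mathbb{E}[\lVert Q^*(X)\rVert^4]$ and $\frac{1}{n} \sum_{i=1}^{n} \lVert [Q^*(x^i)]^{-1}\rVert^2 \xrightarrow{p} \mathbb{E}[\lVert [Q^*(X)]^{-1}\rVert^2]$, where these expectations are finite; (ii) $\frac{1}{n} \sum_{i=1}^{n} \lVert\varepsilon^i\rVert^4 \xrightarrow{p} \mathbb{E}[\lVert\varepsilon\rVert^4] < +\infty$; (iii) $\hat{f}_n(x) \xrightarrow{p} f^*(x)$ and $\hat{Q}_n(x) \xrightarrow{p} Q^*(x)$ for $P_X$-a.e. $x \in \mathcal{X}$, and $\frac{1}{n} \sum_{i=1}^{n} \lVert \hat{f}_n(x^i) - f^*(x^i)\rVert^2 \xrightarrow{p} 0$ and $\frac{1}{n} \sum_{i=1}^{n} \lVert [\hat{Q}_n(x^i)]^{-1} - [Q^*(x^i)]^{-1}\rVert^2 \xrightarrow{p} 0$. Then $\frac{1}{n} \sum_{i=1}^{n} \lVert \tilde{\varepsilon}^i_n(x)\rVert \xrightarrow{p} 0$ for $P_X$-a.e. $x \in \mathcal{X}$.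
   Context: Random vectors $Y \in \mathbb{R}^{d_y}$ and covariates $X \in \mathbb{R}^{d_x}$ satisfy $Y = f^*(X) + Q^*(X)\varepsilon$, where $f^*:\mathbb{R}^{d_x}\to\mathbb{R}^{d_y}$, $Q^*:\mathbb{R}^{d_x}\to\mathbb{R}^{d_y\times d_y}$, the zero-mean random error $\varepsilon \in \mathbb{R}^{d_y}$ is independent of $X$, and $Q^*(x) \succ 0$ (positive definite) for $P_X$-a.e. $x$ in the support $\mathcal{X}$ of $X$ ($P_X$ is the distribution of $X$). Data $\mathcal{D}_n = \{(y^i,x^i)\}_{i=1}^n$ are joint observations of $(Y,X)$, with corresponding error realizations $\varepsilon^i = [Q^*(x^i)]^{-1}(y^i - f^*(x^i))$. Regression estimates $\hat{f}_n$ of $f^*$ and $\hat{Q}_n$ of $Q^*$ are computed from $\mathcal{D}_n$, with $\hat{Q}_n(x) \succ 0$ almost surely for $P_X$-a.e. $x \in \mathcal{X}$. Define empirical residuals $\hat{\varepsilon}^i_n := [\hat{Q}_n(x^i)]^{-1}(y^i - \hat{f}_n(x^i))$ and, for $x \in \mathcal{X}$, the deviation terms $\tilde{\varepsilon}^i_n(x) := (\hat{f}_n(x) + \hat{Q}_n(x)\hat{\varepsilon}^i_n) - (f^*(x) + Q^*(x)\varepsilon^i)$, $i=1,\dots,n$. $\lVert\cdot\rVert$ is the Euclidean norm on vectors and the induced operator norm on matrices. $\xrightarrow{p}$ denotes convergence in probability as $n\to\infty$ with respect to the probability measure generating the data. *)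

theory Defs
  imports "HOL-Probability.Probability"
begin

definition opnorm :: "real^'n^'m \<Rightarrow> real" where
  "opnorm A = onorm (\<lambda>v. A *v v)"

definition pos_def :: "real^'n^'n \<Rightarrow> bool" where
  "pos_def A \<longleftrightarrow> transpose A = A \<and> (\<forall>v. v \<noteq> 0 \<longrightarrow> v \<bullet> (A *v v) > 0)"

text \<open>Stated via outer probability, so that
  no measurability side conditions are needed; for measurable Z n it is the usual
  notion: for all e > 0, P(dist (Z n) c > e) tends to 0.\<close>
definition conv_in_prob :: "'a measure \<Rightarrow> (nat \<Rightarrow> 'a \<Rightarrow> 'b::metric_space) \<Rightarrow> 'b \<Rightarrow> bool" where
  "conv_in_prob M Z c \<longleftrightarrow>
     (\<forall>e>0. \<forall>\<delta>>0. \<exists>N. \<forall>n\<ge>N. \<exists>A\<in>sets M.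
        {\<omega>\<in>space M. dist (Z n \<omega>) c > e} \<subseteq> A \<and> measure M A < \<delta>)"

text \<open>Standardized residual [Q(x)]^{-1} (y - f(x)). With (f,Q) = (f*,Q*) this is the
  error realization eps^i; with the estimates it is the empirical residual.\<close>
definition std_resid ::
  "(real^'dx \<Rightarrow> real^'dy) \<Rightarrow> (real^'dx \<Rightarrow> real^'dy^'dy) \<Rightarrow> real^'dx \<Rightarrow> real^'dy \<Rightarrow> real^'dy" where
  "std_resid f Q xi yi = matrix_inv (Q xi) *v (yi - f xi)"

definition eps_tilde ::
  "(real^'dx \<Rightarrow> real^'dy) \<Rightarrow> (real^'dx \<Rightarrow> real^'dy^'dy) \<Rightarrow>
   (real^'dx \<Rightarrow> real^'dy) \<Rightarrow> (real^'dx \<Rightarrow> real^'dy^'dy) \<Rightarrow>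
   real^'dx \<Rightarrow> real^'dy \<Rightarrow> real^'dx \<Rightarrow> real^'dy" where
  "eps_tilde fs Qs fh Qh xi yi x =
     (fh x + Qh x *v std_resid fh Qh xi yi) - (fs x + Qs x *v std_resid fs Qs xi yi)"

end

theory Submission
  imports Defs
begin

(*
  Write e_i and eh_i for the standardized residuals of observation i under the true model
  (fstar, Qstar) and under the estimates (fhat, Qhat).  Then

    eps_tilde_i(x) = (fhat x - fstar x) + (Qhat x - Qstar x) e_i + Qhat x (eh_i - e_i),
    eh_i - e_i = D_i Qstar(x_i) e_i - D_i d_i - Qstar(x_i)^-1 d_i,

  where D_i = Qhat(x_i)^-1 - Qstar(x_i)^-1 and d_i = fhat(x_i) - fstar(x_i).  Taking norms,
  averaging over i and applying Cauchy-Schwarz bounds the sample mean of the norms of the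
  eps_tilde_i(x) by a finite sum of products in which one factor tends to 0 in probability (the
  estimation errors at x, and the root mean squares of D_i and d_i) while the other is bounded in
  probability (the convergent sample moments of Qstar, its inverse and the errors).
*)

section \<open>Deterministic bounds\<close>

lemma opnorm_mult_le: "norm (A *v v) \<le> opnorm A * norm v"
  for A :: "real^'n^'m"
  unfolding opnorm_def by (rule onorm) simp

lemma opnorm_nonneg: "0 \<le> opnorm A"
  for A :: "real^'n^'m"
  unfolding opnorm_def by (rule onorm_pos_le) simp

lemma invertible_if_pos_def:
  fixes A :: "real^'n^'n"
  assumes "pos_def A"
  shows "invertible A"
proof -
  have "A *v v = 0 \<Longrightarrow> v = 0" for v
    using assms unfolding pos_def_def by (metis inner_zero_right less_irrefl)
  then show ?thesis
    by (simp add: invertible_left_inverse matrix_left_invertible_ker)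
qed

lemma matrix_inv_right:
  fixes A :: "'a::semiring_1^'n^'n"
  assumes "invertible A"
  shows "A ** matrix_inv A = mat 1"
  using assms unfolding invertible_def matrix_inv_def by (metis (mono_tags, lifting) someI_ex)

lemma norm_eps_tilde_le:
  "norm (eps_tilde fs Qs fh Qh xi yi x)
     \<le> norm (fh x - fs x) + opnorm (Qh x - Qs x) * norm (std_resid fs Qs xi yi)
       + (opnorm (Qh x - Qs x) + opnorm (Qs x))
         * norm (std_resid fh Qh xi yi - std_resid fs Qs xi yi)"
proof -
  define e where "e = std_resid fs Qs xi yi"
  define \<Delta> where "\<Delta> = std_resid fh Qh xi yi - e"
  have "eps_tilde fs Qs fh Qh xi yi x
      = (fh x - fs x) + (Qh x - Qs x) *v e + (Qh x - Qs x) *v \<Delta> + Qs x *v \<Delta>"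
    unfolding eps_tilde_def e_def \<Delta>_def by (simp add: algebra_simps)
  then have "norm (eps_tilde fs Qs fh Qh xi yi x)
      \<le> norm (fh x - fs x) + norm ((Qh x - Qs x) *v e) + norm ((Qh x - Qs x) *v \<Delta>) + norm (Qs x *v \<Delta>)"
    by (smt (verit) norm_triangle_ineq)
  also have "\<dots> \<le> norm (fh x - fs x) + opnorm (Qh x - Qs x) * norm e
      + opnorm (Qh x - Qs x) * norm \<Delta> + opnorm (Qs x) * norm \<Delta>"
    by (intro add_mono opnorm_mult_le order_refl)
  finally show ?thesis
    unfolding e_def \<Delta>_def by (simp add: distrib_right add.assoc)
qed

lemma norm_std_resid_diff_le:
  assumes "invertible (Qs xi)"
  shows "norm (std_resid fh Qh xi yi - std_resid fs Qs xi yi)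
     \<le> opnorm (matrix_inv (Qh xi) - matrix_inv (Qs xi)) * (opnorm (Qs xi) * norm (std_resid fs Qs xi yi))
       + opnorm (matrix_inv (Qh xi) - matrix_inv (Qs xi)) * norm (fh xi - fs xi)
       + opnorm (matrix_inv (Qs xi)) * norm (fh xi - fs xi)"
proof -
  define e where "e = std_resid fs Qs xi yi"
  define r where "r = yi - fs xi"
  define d where "d = fh xi - fs xi"
  define U where "U = matrix_inv (Qs xi)"
  define D where "D = matrix_inv (Qh xi) - U"
  have r: "r = Qs xi *v e"
    using matrix_inv_right[OF assms]
    by (simp add: e_def std_resid_def r_def matrix_vector_mul_assoc)
  have "std_resid fh Qh xi yi - e = D *v r - D *v d - U *v d"
    unfolding std_resid_def e_def D_def U_def r_def d_def by (simp add: algebra_simps)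
  then have "norm (std_resid fh Qh xi yi - e) \<le> norm (D *v r) + norm (D *v d) + norm (U *v d)"
    by (smt (verit) norm_triangle_ineq norm_triangle_ineq4)
  also have "\<dots> \<le> opnorm D * (opnorm (Qs xi) * norm e) + opnorm D * norm d + opnorm U * norm d"
    unfolding r
    by (intro add_mono opnorm_mult_le order_trans[OF opnorm_mult_le] mult_left_mono opnorm_nonneg)
  finally show ?thesis
    unfolding e_def d_def U_def D_def .
qed

lemma norm_eps_tilde_le_estimation_errors:
  assumes "invertible (Qs xi)"
  shows "norm (eps_tilde fs Qs fh Qh xi yi x)
    \<le> norm (fh x - fs x) + opnorm (Qh x - Qs x) * norm (std_resid fs Qs xi yi)
      + (opnorm (Qh x - Qs x) + opnorm (Qs x))
        * (opnorm (matrix_inv (Qh xi) - matrix_inv (Qs xi)) * (opnorm (Qs xi) * norm (std_resid fs Qs xi yi))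
           + opnorm (matrix_inv (Qh xi) - matrix_inv (Qs xi)) * norm (fh xi - fs xi)
           + opnorm (matrix_inv (Qs xi)) * norm (fh xi - fs xi))"
  by (rule order_trans[OF norm_eps_tilde_le add_left_mono[OF mult_left_mono]])
    (simp_all add: norm_std_resid_diff_le[where Qs = Qs and xi = xi, OF assms] opnorm_nonneg)

definition sample_mean :: "nat \<Rightarrow> (nat \<Rightarrow> real) \<Rightarrow> real" where
  "sample_mean n f = (\<Sum>i<n. f i) / real n"

lemma sample_mean_mono:
  "(\<And>i. i < n \<Longrightarrow> f i \<le> g i) \<Longrightarrow> sample_mean n f \<le> sample_mean n g"
  unfolding sample_mean_def by (intro divide_right_mono sum_mono) auto

lemma sample_mean_nonneg: "(\<And>i. 0 \<le> f i) \<Longrightarrow> 0 \<le> sample_mean n f"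
  unfolding sample_mean_def by (intro divide_nonneg_nonneg sum_nonneg) auto

lemma sample_mean_add: "sample_mean n (\<lambda>i. f i + g i) = sample_mean n f + sample_mean n g"
  unfolding sample_mean_def by (simp add: sum.distrib add_divide_distrib)

lemma sample_mean_cmult: "sample_mean n (\<lambda>i. c * f i) = c * sample_mean n f"
  unfolding sample_mean_def by (simp add: sum_distrib_left)

lemma sample_mean_const_le: "0 \<le> c \<Longrightarrow> sample_mean n (\<lambda>i. c) \<le> c"
  unfolding sample_mean_def by simp

lemma sample_mean_mult_le:
  "sample_mean n (\<lambda>i. f i * g i)
     \<le> sqrt (sample_mean n (\<lambda>i. (f i)\<^sup>2)) * sqrt (sample_mean n (\<lambda>i. (g i)\<^sup>2))"
proof (cases "n = 0")
  case False
  have "(\<Sum>i<n. f i * g i) \<le> sqrt ((\<Sum>i<n. f i * g i)\<^sup>2)"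
    by simp
  also have "\<dots> \<le> sqrt ((\<Sum>i<n. (f i)\<^sup>2) * (\<Sum>i<n. (g i)\<^sup>2))"
    by (rule real_sqrt_le_mono, rule Cauchy_Schwarz_ineq_sum)
  finally show ?thesis
    using False
    by (simp add: sample_mean_def real_sqrt_mult real_sqrt_divide divide_right_mono
        flip: power2_eq_square)
qed (simp add: sample_mean_def)

lemma sample_mean_residual_bound:
  fixes e q D d p :: "nat \<Rightarrow> real"
  assumes "0 \<le> a" "0 \<le> b" "0 \<le> c"
  shows "sample_mean n (\<lambda>i. a + b * e i + (b + c) * (D i * (q i * e i) + D i * d i + p i * d i))
    \<le> a + b * (1 + sample_mean n (\<lambda>i. e i ^ 4))
      + (b + c) * (sqrt (sample_mean n (\<lambda>i. (D i)\<^sup>2))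
                     * sqrt (sample_mean n (\<lambda>i. q i ^ 4) + sample_mean n (\<lambda>i. e i ^ 4))
                   + sqrt (sample_mean n (\<lambda>i. (D i)\<^sup>2)) * sqrt (sample_mean n (\<lambda>i. (d i)\<^sup>2))
                   + sqrt (sample_mean n (\<lambda>i. (p i)\<^sup>2)) * sqrt (sample_mean n (\<lambda>i. (d i)\<^sup>2)))"
    (is "?lhs \<le> ?rhs")
proof -
  have "e i \<le> 1 + e i ^ 4" for i
    by (cases "e i \<le> 1") (simp_all add: add_increasing add_increasing2 self_le_power zero_le_even_power)
  then have e: "sample_mean n e \<le> 1 + sample_mean n (\<lambda>i. e i ^ 4)"
    using sample_mean_mono[of n e "\<lambda>i. 1 + e i ^ 4"] sample_mean_const_le[of 1 n]
    by (simp add: sample_mean_add)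
  have "(q i * e i)\<^sup>2 \<le> q i ^ 4 + e i ^ 4" for i
  proof -
    have "2 * (q i * e i)\<^sup>2 \<le> ((q i)\<^sup>2)\<^sup>2 + ((e i)\<^sup>2)\<^sup>2"
      using sum_squares_bound[of "(q i)\<^sup>2" "(e i)\<^sup>2"] by (simp add: power_mult_distrib)
    moreover have "((q i)\<^sup>2)\<^sup>2 + ((e i)\<^sup>2)\<^sup>2 = q i ^ 4 + e i ^ 4"
      by (simp flip: power_mult)
    moreover have "0 \<le> (q i * e i)\<^sup>2"
      by simp
    ultimately show ?thesis
      by linarith
  qed
  then have "sample_mean n (\<lambda>i. (q i * e i)\<^sup>2) \<le> sample_mean n (\<lambda>i. q i ^ 4) + sample_mean n (\<lambda>i. e i ^ 4)"
    by (simp add: sample_mean_mono flip: sample_mean_add)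
  then have "sqrt (sample_mean n (\<lambda>i. (q i * e i)\<^sup>2))
      \<le> sqrt (sample_mean n (\<lambda>i. q i ^ 4) + sample_mean n (\<lambda>i. e i ^ 4))"
    by (rule real_sqrt_le_mono)
  then have qe: "sample_mean n (\<lambda>i. D i * (q i * e i))
      \<le> sqrt (sample_mean n (\<lambda>i. (D i)\<^sup>2)) * sqrt (sample_mean n (\<lambda>i. q i ^ 4) + sample_mean n (\<lambda>i. e i ^ 4))"
    by (rule order_trans[OF sample_mean_mult_le mult_left_mono]) (simp add: sample_mean_nonneg)
  have "?lhs = sample_mean n (\<lambda>i. a) + b * sample_mean n e
        + (b + c) * (sample_mean n (\<lambda>i. D i * (q i * e i)) + sample_mean n (\<lambda>i. D i * d i)
                     + sample_mean n (\<lambda>i. p i * d i))"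
    by (simp add: sample_mean_add sample_mean_cmult)
  also have "\<dots> \<le> ?rhs"
    using assms e qe
    by (intro add_mono mult_left_mono sample_mean_mult_le sample_mean_const_le) auto
  finally show ?thesis .
qed

section \<open>Convergence in probability\<close>

definition outer_prob_less :: "'a measure \<Rightarrow> 'a set \<Rightarrow> real \<Rightarrow> bool" where
  "outer_prob_less M S \<delta> \<longleftrightarrow> (\<exists>A\<in>sets M. S \<subseteq> A \<and> measure M A < \<delta>)"

lemma outer_prob_less_mono:
  "S \<subseteq> T \<Longrightarrow> \<alpha> \<le> \<beta> \<Longrightarrow> outer_prob_less M T \<alpha> \<Longrightarrow> outer_prob_less M S \<beta>"
  unfolding outer_prob_less_def by (meson order.trans order_less_le_trans)

lemma outer_prob_less_Un:
  assumes "outer_prob_less M S \<alpha>" "outer_prob_less M T \<beta>"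
  shows "outer_prob_less M (S \<union> T) (\<alpha> + \<beta>)"
proof -
  obtain A B where "A \<in> sets M" "S \<subseteq> A" "measure M A < \<alpha>" "B \<in> sets M" "T \<subseteq> B" "measure M B < \<beta>"
    using assms unfolding outer_prob_less_def by blast
  moreover from this have "measure M (A \<union> B) \<le> measure M A + measure M B"
    by (intro measure_Un_le)
  ultimately show ?thesis
    unfolding outer_prob_less_def by (intro bexI[of _ "A \<union> B"]) auto
qed

lemma outer_prob_less_Un_null:
  assumes "outer_prob_less M S \<delta>" "N \<in> null_sets M"
  shows "outer_prob_less M (S \<union> N) \<delta>"
proof -
  obtain A where "A \<in> sets M" "S \<subseteq> A" "measure M A < \<delta>"
    using assms(1) unfolding outer_prob_less_def by blast
  with assms(2) show ?thesis
    unfolding outer_prob_less_def by (intro bexI[of _ "A \<union> N"]) (auto simp: measure_Un_null_set)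
qed

lemma eventually_outer_prob_less_Un:
  assumes "eventually (\<lambda>n. outer_prob_less M (S n) \<alpha>) F"
    and "eventually (\<lambda>n. outer_prob_less M (T n) \<beta>) F"
    and "\<And>n. U n \<subseteq> S n \<union> T n" and "\<alpha> + \<beta> \<le> \<delta>"
  shows "eventually (\<lambda>n. outer_prob_less M (U n) \<delta>) F"
  using assms(1,2)
  by eventually_elim (rule outer_prob_less_mono[OF assms(3,4) outer_prob_less_Un])

lemma conv_in_prob_iff:
  "conv_in_prob M Z c \<longleftrightarrow>
     (\<forall>e>0. \<forall>\<delta>>0. eventually (\<lambda>n. outer_prob_less M {\<omega>\<in>space M. e < dist (Z n \<omega>) c} \<delta>) sequentially)"
  unfolding conv_in_prob_def outer_prob_less_def eventually_sequentially ..

lemma conv_in_prob_zero_iff: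
  "conv_in_prob M Z (0::real) \<longleftrightarrow>
     (\<forall>e>0. \<forall>\<delta>>0. eventually (\<lambda>n. outer_prob_less M {\<omega>\<in>space M. e < \<bar>Z n \<omega>\<bar>} \<delta>) sequentially)"
  by (simp add: conv_in_prob_iff)

definition bounded_in_prob :: "'a measure \<Rightarrow> (nat \<Rightarrow> 'a \<Rightarrow> real) \<Rightarrow> bool" where
  "bounded_in_prob M Z \<longleftrightarrow>
     (\<forall>\<delta>>0. \<exists>K. eventually (\<lambda>n. outer_prob_less M {\<omega>\<in>space M. K < \<bar>Z n \<omega>\<bar>} \<delta>) sequentially)"

lemma conv_in_prob_imp_bounded_in_prob:
  assumes "conv_in_prob M Z (c::real)"
  shows "bounded_in_prob M Z"
  unfolding bounded_in_prob_def
proof (intro allI impI exI)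
  fix \<delta> :: real assume "0 < \<delta>"
  then have "eventually (\<lambda>n. outer_prob_less M {\<omega>\<in>space M. 1 < dist (Z n \<omega>) c} \<delta>) sequentially"
    using assms by (simp add: conv_in_prob_iff)
  then show "eventually (\<lambda>n. outer_prob_less M {\<omega>\<in>space M. \<bar>c\<bar> + 1 < \<bar>Z n \<omega>\<bar>} \<delta>) sequentially"
    by eventually_elim (erule outer_prob_less_mono[rotated 2], auto simp: dist_real_def)
qed

lemma bounded_in_prob_const: "bounded_in_prob M (\<lambda>n \<omega>. c)"
  unfolding bounded_in_prob_def outer_prob_less_def
  by (auto intro!: exI[of _ "\<bar>c\<bar>"] bexI[of _ "{}"])

lemma bounded_in_prob_add:
  assumes "bounded_in_prob M Z" "bounded_in_prob M W"
  shows "bounded_in_prob M (\<lambda>n \<omega>. Z n \<omega> + W n \<omega>)"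
  unfolding bounded_in_prob_def
proof (intro allI impI)
  fix \<delta> :: real assume "0 < \<delta>"
  then obtain K L where
    "eventually (\<lambda>n. outer_prob_less M {\<omega>\<in>space M. K < \<bar>Z n \<omega>\<bar>} (\<delta>/2)) sequentially"
    "eventually (\<lambda>n. outer_prob_less M {\<omega>\<in>space M. L < \<bar>W n \<omega>\<bar>} (\<delta>/2)) sequentially"
    using assms unfolding bounded_in_prob_def by (meson half_gt_zero)
  then have "eventually (\<lambda>n. outer_prob_less M {\<omega>\<in>space M. K + L < \<bar>Z n \<omega> + W n \<omega>\<bar>} \<delta>) sequentially"
    by (rule eventually_outer_prob_less_Un) auto
  then show "\<exists>K. eventually (\<lambda>n. outer_prob_less M {\<omega>\<in>space M. K < \<bar>Z n \<omega> + W n \<omega>\<bar>} \<delta>) sequentially" ..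
qed

lemma bounded_in_prob_sqrt:
  assumes "bounded_in_prob M Z"
  shows "bounded_in_prob M (\<lambda>n \<omega>. sqrt (Z n \<omega>))"
  unfolding bounded_in_prob_def
proof (intro allI impI)
  fix \<delta> :: real assume "0 < \<delta>"
  then obtain K where "eventually (\<lambda>n. outer_prob_less M {\<omega>\<in>space M. K < \<bar>Z n \<omega>\<bar>} \<delta>) sequentially"
    using assms unfolding bounded_in_prob_def by blast
  then have "eventually (\<lambda>n. outer_prob_less M {\<omega>\<in>space M. sqrt \<bar>K\<bar> < \<bar>sqrt (Z n \<omega>)\<bar>} \<delta>) sequentially"
    by eventually_elim (erule outer_prob_less_mono[rotated 2], auto simp flip: real_sqrt_abs')
  then show "\<exists>K. eventually (\<lambda>n. outer_prob_less M {\<omega>\<in>space M. K < \<bar>sqrt (Z n \<omega>)\<bar>} \<delta>) sequentially" ..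
qed

lemma conv_in_prob_zero_add:
  assumes "conv_in_prob M Z (0::real)" "conv_in_prob M W 0"
  shows "conv_in_prob M (\<lambda>n \<omega>. Z n \<omega> + W n \<omega>) 0"
  unfolding conv_in_prob_zero_iff
proof (intro allI impI)
  fix e \<delta> :: real assume "0 < e" "0 < \<delta>"
  then have
    "eventually (\<lambda>n. outer_prob_less M {\<omega>\<in>space M. e/2 < \<bar>Z n \<omega>\<bar>} (\<delta>/2)) sequentially"
    "eventually (\<lambda>n. outer_prob_less M {\<omega>\<in>space M. e/2 < \<bar>W n \<omega>\<bar>} (\<delta>/2)) sequentially"
    using assms unfolding conv_in_prob_zero_iff by (meson half_gt_zero)+
  then show "eventually (\<lambda>n. outer_prob_less M {\<omega>\<in>space M. e < \<bar>Z n \<omega> + W n \<omega>\<bar>} \<delta>) sequentially"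
    by (rule eventually_outer_prob_less_Un) auto
qed

lemma conv_in_prob_zero_mult:
  assumes "conv_in_prob M Z (0::real)" "bounded_in_prob M W"
  shows "conv_in_prob M (\<lambda>n \<omega>. Z n \<omega> * W n \<omega>) 0"
  unfolding conv_in_prob_zero_iff
proof (intro allI impI)
  fix e \<delta> :: real assume "0 < e" "0 < \<delta>"
  then obtain K where K: "eventually (\<lambda>n. outer_prob_less M {\<omega>\<in>space M. K < \<bar>W n \<omega>\<bar>} (\<delta>/2)) sequentially"
    using assms(2) unfolding bounded_in_prob_def by (meson half_gt_zero)
  define L where "L = max K 1"
  have "eventually (\<lambda>n. outer_prob_less M {\<omega>\<in>space M. e/L < \<bar>Z n \<omega>\<bar>} (\<delta>/2)) sequentially"
    using assms(1) \<open>0 < e\<close> \<open>0 < \<delta>\<close> by (simp add: conv_in_prob_zero_iff L_def)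
  then show "eventually (\<lambda>n. outer_prob_less M {\<omega>\<in>space M. e < \<bar>Z n \<omega> * W n \<omega>\<bar>} \<delta>) sequentially"
    using K
  proof (rule eventually_outer_prob_less_Un)
    have "e/L < \<bar>Z n \<omega>\<bar>" if "e < \<bar>Z n \<omega> * W n \<omega>\<bar>" "\<bar>W n \<omega>\<bar> \<le> K" for n \<omega>
    proof (rule ccontr)
      assume "\<not> e/L < \<bar>Z n \<omega>\<bar>"
      then have "\<bar>Z n \<omega> * W n \<omega>\<bar> \<le> e/L * L"
        unfolding abs_mult using that(2) by (intro mult_mono) (auto simp: L_def)
      with that(1) show False
        by (simp add: L_def)
    qed
    then show "{\<omega>\<in>space M. e < \<bar>Z n \<omega> * W n \<omega>\<bar>}
        \<subseteq> {\<omega>\<in>space M. e/L < \<bar>Z n \<omega>\<bar>} \<union> {\<omega>\<in>space M. K < \<bar>W n \<omega>\<bar>}" for n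
      by (auto simp: not_less)
  qed simp
qed

lemma conv_in_prob_zero_mult_left:
  assumes "bounded_in_prob M W" "conv_in_prob M Z (0::real)"
  shows "conv_in_prob M (\<lambda>n \<omega>. W n \<omega> * Z n \<omega>) 0"
  using conv_in_prob_zero_mult[OF assms(2,1)] by (simp add: mult.commute)

lemma conv_in_prob_zero_sqrt:
  assumes "conv_in_prob M Z (0::real)"
  shows "conv_in_prob M (\<lambda>n \<omega>. sqrt (Z n \<omega>)) 0"
  unfolding conv_in_prob_zero_iff
proof (intro allI impI)
  fix e \<delta> :: real assume "0 < e" "0 < \<delta>"
  then have "eventually (\<lambda>n. outer_prob_less M {\<omega>\<in>space M. e\<^sup>2 < \<bar>Z n \<omega>\<bar>} \<delta>) sequentially"
    using assms by (simp add: conv_in_prob_zero_iff)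
  moreover have "e\<^sup>2 < \<bar>z\<bar>" if "e < \<bar>sqrt z\<bar>" for z
    using that \<open>0 < e\<close> by (metis abs_of_pos real_sqrt_abs real_sqrt_abs' real_sqrt_less_iff)
  ultimately show "eventually (\<lambda>n. outer_prob_less M {\<omega>\<in>space M. e < \<bar>sqrt (Z n \<omega>)\<bar>} \<delta>) sequentially"
    by (elim eventually_mono outer_prob_less_mono[rotated 2]) auto
qed

lemma conv_in_prob_zero_dominated:
  assumes "\<And>n. AE \<omega> in M. \<bar>Z n \<omega>\<bar> \<le> W n \<omega>" and "conv_in_prob M W (0::real)"
  shows "conv_in_prob M Z 0"
  unfolding conv_in_prob_zero_iff
proof (intro allI impI)
  fix e \<delta> :: real assume "0 < e" "0 < \<delta>"
  then have "eventually (\<lambda>n. outer_prob_less M {\<omega>\<in>space M. e < \<bar>W n \<omega>\<bar>} \<delta>) sequentially"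
    using assms(2) by (simp add: conv_in_prob_zero_iff)
  then show "eventually (\<lambda>n. outer_prob_less M {\<omega>\<in>space M. e < \<bar>Z n \<omega>\<bar>} \<delta>) sequentially"
  proof eventually_elim
    case (elim n)
    obtain N where N: "N \<in> null_sets M" "{\<omega>\<in>space M. \<not> \<bar>Z n \<omega>\<bar> \<le> W n \<omega>} \<subseteq> N"
      using assms(1)[of n] by (auto elim!: AE_E)
    show ?case
      by (rule outer_prob_less_mono[OF _ order_refl outer_prob_less_Un_null[OF elim N(1)]])
        (use N(2) in force)
  qed
qed

lemma conv_in_prob_zero_residual_majorant:
  fixes a b q4 p2 e4 d2 D2 :: "nat \<Rightarrow> 'a \<Rightarrow> real"
  assumes a: "conv_in_prob M a 0" and b: "conv_in_prob M b 0"
    and q4: "bounded_in_prob M q4" and p2: "bounded_in_prob M p2" and e4: "bounded_in_prob M e4"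
    and d2: "conv_in_prob M d2 0" and D2: "conv_in_prob M D2 0"
  shows "conv_in_prob M (\<lambda>n \<omega>. a n \<omega> + b n \<omega> * (1 + e4 n \<omega>)
    + (b n \<omega> + c) * (sqrt (D2 n \<omega>) * sqrt (q4 n \<omega> + e4 n \<omega>) + sqrt (D2 n \<omega>) * sqrt (d2 n \<omega>)
                     + sqrt (p2 n \<omega>) * sqrt (d2 n \<omega>))) 0"
proof -
  have "conv_in_prob M (\<lambda>n \<omega>. sqrt (D2 n \<omega>) * sqrt (q4 n \<omega> + e4 n \<omega>)) 0"
    by (rule conv_in_prob_zero_mult[OF conv_in_prob_zero_sqrt[OF D2]
          bounded_in_prob_sqrt[OF bounded_in_prob_add[OF q4 e4]]])
  moreover have "conv_in_prob M (\<lambda>n \<omega>. sqrt (D2 n \<omega>) * sqrt (d2 n \<omega>)) 0"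
    by (rule conv_in_prob_zero_mult[OF conv_in_prob_zero_sqrt[OF D2]
          conv_in_prob_imp_bounded_in_prob[OF conv_in_prob_zero_sqrt[OF d2]]])
  moreover have "conv_in_prob M (\<lambda>n \<omega>. sqrt (p2 n \<omega>) * sqrt (d2 n \<omega>)) 0"
    by (rule conv_in_prob_zero_mult_left[OF bounded_in_prob_sqrt[OF p2] conv_in_prob_zero_sqrt[OF d2]])
  ultimately have "conv_in_prob M (\<lambda>n \<omega>. sqrt (D2 n \<omega>) * sqrt (q4 n \<omega> + e4 n \<omega>)
      + sqrt (D2 n \<omega>) * sqrt (d2 n \<omega>) + sqrt (p2 n \<omega>) * sqrt (d2 n \<omega>)) 0"
    by (intro conv_in_prob_zero_add)
  then show ?thesis
    by (rule conv_in_prob_zero_add[OF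
          conv_in_prob_zero_add[OF a conv_in_prob_zero_mult[OF b
            bounded_in_prob_add[OF bounded_in_prob_const e4]]]
          conv_in_prob_zero_mult_left[OF
            bounded_in_prob_add[OF conv_in_prob_imp_bounded_in_prob[OF b] bounded_in_prob_const]]])
qed

section \<open>The regression model\<close>

lemma borel_measurable_snd: "snd \<in> borel_measurable borel"
  by (intro borel_measurable_continuous_onI continuous_intros)

lemma distr_snd_eq:
  assumes "(\<lambda>\<omega>. (f \<omega>, g \<omega>)) \<in> borel_measurable M" "(\<lambda>\<omega>. (f' \<omega>, g' \<omega>)) \<in> borel_measurable M"
    and "distr M borel (\<lambda>\<omega>. (f \<omega>, g \<omega>)) = distr M borel (\<lambda>\<omega>. (f' \<omega>, g' \<omega>))"
  shows "distr M borel g = distr M borel g'"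
proof -
  have "distr M borel g = distr (distr M borel (\<lambda>\<omega>. (f \<omega>, g \<omega>))) borel snd"
    using distr_distr[OF borel_measurable_snd assms(1)] by (simp add: comp_def)
  also have "\<dots> = distr M borel g'"
    using distr_distr[OF borel_measurable_snd assms(2)] by (simp add: assms(3) comp_def)
  finally show ?thesis .
qed

lemma borel_measurable_matrix_vector_mult:
  fixes A :: "'a \<Rightarrow> real^'n^'m" and v :: "'a \<Rightarrow> real^'n"
  assumes "A \<in> borel_measurable M" "v \<in> borel_measurable M"
  shows "(\<lambda>\<omega>. A \<omega> *v v \<omega>) \<in> borel_measurable M"
  using assms by (rule borel_measurable_continuous_Pair)
    (auto simp: case_prod_unfold matrix_vector_mult_def intro!: continuous_intros)

lemma conv_in_prob_sample_mean_norm_eps_tilde: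
  fixes fs :: "real^'dx \<Rightarrow> real^'dy" and Qs :: "real^'dx \<Rightarrow> real^'dy^'dy"
    and fh :: "nat \<Rightarrow> 'a \<Rightarrow> real^'dx \<Rightarrow> real^'dy" and Qh :: "nat \<Rightarrow> 'a \<Rightarrow> real^'dx \<Rightarrow> real^'dy^'dy"
    and xs :: "nat \<Rightarrow> 'a \<Rightarrow> real^'dx" and ys :: "nat \<Rightarrow> 'a \<Rightarrow> real^'dy"
  assumes inv: "\<And>i. AE \<omega> in M. invertible (Qs (xs i \<omega>))"
    and fh_x: "conv_in_prob M (\<lambda>n \<omega>. norm (fh n \<omega> x - fs x)) 0"
    and Qh_x: "conv_in_prob M (\<lambda>n \<omega>. opnorm (Qh n \<omega> x - Qs x)) 0"
    and Q4: "bounded_in_prob M (\<lambda>n \<omega>. sample_mean n (\<lambda>i. opnorm (Qs (xs i \<omega>)) ^ 4))"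
    and P2: "bounded_in_prob M (\<lambda>n \<omega>. sample_mean n (\<lambda>i. opnorm (matrix_inv (Qs (xs i \<omega>))) ^ 2))"
    and E4: "bounded_in_prob M (\<lambda>n \<omega>. sample_mean n (\<lambda>i. norm (std_resid fs Qs (xs i \<omega>) (ys i \<omega>)) ^ 4))"
    and Dd: "conv_in_prob M (\<lambda>n \<omega>. sample_mean n (\<lambda>i. norm (fh n \<omega> (xs i \<omega>) - fs (xs i \<omega>)) ^ 2)) 0"
    and DD: "conv_in_prob M (\<lambda>n \<omega>. sample_mean n
               (\<lambda>i. opnorm (matrix_inv (Qh n \<omega> (xs i \<omega>)) - matrix_inv (Qs (xs i \<omega>))) ^ 2)) 0"
  shows "conv_in_prob M
           (\<lambda>n \<omega>. sample_mean n (\<lambda>i. norm (eps_tilde fs Qs (fh n \<omega>) (Qh n \<omega>) (xs i \<omega>) (ys i \<omega>) x))) 0"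
proof -
  define a where "a = (\<lambda>n \<omega>. norm (fh n \<omega> x - fs x))"
  define b where "b = (\<lambda>n \<omega>. opnorm (Qh n \<omega> x - Qs x))"
  define c where "c = opnorm (Qs x)"
  define q4 where "q4 = (\<lambda>n \<omega>. sample_mean n (\<lambda>i. opnorm (Qs (xs i \<omega>)) ^ 4))"
  define p2 where "p2 = (\<lambda>n \<omega>. sample_mean n (\<lambda>i. opnorm (matrix_inv (Qs (xs i \<omega>))) ^ 2))"
  define e4 where "e4 = (\<lambda>n \<omega>. sample_mean n (\<lambda>i. norm (std_resid fs Qs (xs i \<omega>) (ys i \<omega>)) ^ 4))"
  define d2 where "d2 = (\<lambda>n \<omega>. sample_mean n (\<lambda>i. norm (fh n \<omega> (xs i \<omega>) - fs (xs i \<omega>)) ^ 2))"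
  define D2 where "D2 = (\<lambda>n \<omega>. sample_mean n
                     (\<lambda>i. opnorm (matrix_inv (Qh n \<omega> (xs i \<omega>)) - matrix_inv (Qs (xs i \<omega>))) ^ 2))"
  have "AE \<omega> in M. \<bar>sample_mean n (\<lambda>i. norm (eps_tilde fs Qs (fh n \<omega>) (Qh n \<omega>) (xs i \<omega>) (ys i \<omega>) x))\<bar>
    \<le> a n \<omega> + b n \<omega> * (1 + e4 n \<omega>)
      + (b n \<omega> + c) * (sqrt (D2 n \<omega>) * sqrt (q4 n \<omega> + e4 n \<omega>) + sqrt (D2 n \<omega>) * sqrt (d2 n \<omega>)
                       + sqrt (p2 n \<omega>) * sqrt (d2 n \<omega>))" for n
  proof -
    have "AE \<omega> in M. \<forall>i\<in>{..<n}. invertible (Qs (xs i \<omega>))"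
      by (rule AE_finite_allI) (simp_all add: inv)
    then show ?thesis
      unfolding a_def b_def c_def q4_def p2_def e4_def d2_def D2_def
    proof eventually_elim
      case (elim \<omega>)
      then show ?case
        by (subst abs_of_nonneg, simp add: sample_mean_nonneg,
            intro order_trans[OF sample_mean_mono[OF norm_eps_tilde_le_estimation_errors]
              sample_mean_residual_bound]) (simp_all add: opnorm_nonneg)
    qed
  qed
  then show ?thesis
    by (rule conv_in_prob_zero_dominated[OF _ conv_in_prob_zero_residual_majorant])
      (use fh_x Qh_x Q4 P2 E4 Dd DD in \<open>simp_all add: a_def b_def q4_def p2_def e4_def d2_def D2_def\<close>)
qed

theorem theorem4:
  fixes M :: "'a measure"
    and X :: "'a \<Rightarrow> real^'dx" and Y eps :: "'a \<Rightarrow> real^'dy"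
    and fstar :: "real^'dx \<Rightarrow> real^'dy" and Qstar :: "real^'dx \<Rightarrow> real^'dy^'dy"
    and xs :: "nat \<Rightarrow> 'a \<Rightarrow> real^'dx" and ys :: "nat \<Rightarrow> 'a \<Rightarrow> real^'dy"
    and fhat :: "nat \<Rightarrow> 'a \<Rightarrow> real^'dx \<Rightarrow> real^'dy"
    and Qhat :: "nat \<Rightarrow> 'a \<Rightarrow> real^'dx \<Rightarrow> real^'dy^'dy"
  assumes P: "prob_space M"
    and X_rv: "X \<in> borel_measurable M" and eps_rv: "eps \<in> borel_measurable M"
    and fstar_meas: "fstar \<in> borel_measurable borel"
    and Qstar_meas: "Qstar \<in> borel_measurable borel"
    and model: "\<forall>\<omega>\<in>space M. Y \<omega> = fstar (X \<omega>) + Qstar (X \<omega>) *v eps \<omega>"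
    and indep: "prob_space.indep_set M
        (sigma_sets (space M) {eps -` A \<inter> space M | A. A \<in> sets borel})
        (sigma_sets (space M) {X -` A \<inter> space M | A. A \<in> sets borel})"
    and mean0: "integrable M eps" "integral\<^sup>L M eps = 0"
    and Qstar_pd: "AE x in distr M borel X. pos_def (Qstar x)"
    and data_rv: "\<forall>i. (\<lambda>\<omega>. (ys i \<omega>, xs i \<omega>)) \<in> borel_measurable M"
    and data_distr: "\<forall>i. distr M borel (\<lambda>\<omega>. (ys i \<omega>, xs i \<omega>)) = distr M borel (\<lambda>\<omega>. (Y \<omega>, X \<omega>))"
    and Qhat_pd: "\<forall>n. AE x in distr M borel X. AE \<omega> in M. pos_def (Qhat n \<omega> x)"
    and i1: "integrable M (\<lambda>\<omega>. opnorm (Qstar (X \<omega>)) ^ 4)"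
    and i2: "conv_in_prob M (\<lambda>n \<omega>. (\<Sum>i<n. opnorm (Qstar (xs i \<omega>)) ^ 4) / real n)
               (\<integral>\<omega>. opnorm (Qstar (X \<omega>)) ^ 4 \<partial>M)"
    and i3: "integrable M (\<lambda>\<omega>. opnorm (matrix_inv (Qstar (X \<omega>))) ^ 2)"
    and i4: "conv_in_prob M (\<lambda>n \<omega>. (\<Sum>i<n. opnorm (matrix_inv (Qstar (xs i \<omega>))) ^ 2) / real n)
               (\<integral>\<omega>. opnorm (matrix_inv (Qstar (X \<omega>))) ^ 2 \<partial>M)"
    and ii1: "integrable M (\<lambda>\<omega>. norm (eps \<omega>) ^ 4)"
    and ii2: "conv_in_prob M
               (\<lambda>n \<omega>. (\<Sum>i<n. norm (std_resid fstar Qstar (xs i \<omega>) (ys i \<omega>)) ^ 4) / real n)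
               (\<integral>\<omega>. norm (eps \<omega>) ^ 4 \<partial>M)"
    and iii1: "AE x in distr M borel X.
                 conv_in_prob M (\<lambda>n \<omega>. norm (fhat n \<omega> x - fstar x)) 0 \<and>
                 conv_in_prob M (\<lambda>n \<omega>. opnorm (Qhat n \<omega> x - Qstar x)) 0"
    and iii2: "conv_in_prob M
                 (\<lambda>n \<omega>. (\<Sum>i<n. norm (fhat n \<omega> (xs i \<omega>) - fstar (xs i \<omega>)) ^ 2) / real n) 0"
    and iii3: "conv_in_prob M
                 (\<lambda>n \<omega>. (\<Sum>i<n. opnorm (matrix_inv (Qhat n \<omega> (xs i \<omega>))
                                      - matrix_inv (Qstar (xs i \<omega>))) ^ 2) / real n) 0"
  shows "AE x in distr M borel X.
           conv_in_prob M
             (\<lambda>n \<omega>. (\<Sum>i<n. norm (eps_tilde fstar Qstar (fhat n \<omega>) (Qhat n \<omega>)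
                                         (xs i \<omega>) (ys i \<omega>) x)) / real n) 0"
proof -
  have xs_rv: "xs i \<in> borel_measurable M" for i
    using measurable_comp[OF data_rv[rule_format, of i] borel_measurable_snd] by (simp add: comp_def)
  have "(\<lambda>\<omega>. fstar (X \<omega>) + Qstar (X \<omega>) *v eps \<omega>) \<in> borel_measurable M"
    by (intro borel_measurable_add borel_measurable_matrix_vector_mult eps_rv
        measurable_compose[OF X_rv fstar_meas] measurable_compose[OF X_rv Qstar_meas])
  then have "Y \<in> borel_measurable M"
    using model by (metis (no_types, lifting) measurable_cong)
  then have "(\<lambda>\<omega>. (Y \<omega>, X \<omega>)) \<in> borel_measurable M"
    using X_rv by (rule borel_measurable_Pair)
  then have same_law: "distr M borel (xs i) = distr M borel X" for i
    by (rule distr_snd_eq[OF data_rv[rule_format] _ data_distr[rule_format]])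
  have "AE \<omega> in M. pos_def (Qstar (xs i \<omega>))" for i
    by (rule AE_distrD[OF xs_rv]) (unfold same_law, rule Qstar_pd)
  then have inv: "AE \<omega> in M. invertible (Qstar (xs i \<omega>))" for i
    by (rule eventually_mono) (rule invertible_if_pos_def)
  show ?thesis
    using iii1
  proof eventually_elim
    case (elim x)
    then show ?case
      by (intro conv_in_prob_sample_mean_norm_eps_tilde[unfolded sample_mean_def] inv iii2 iii3
          conv_in_prob_imp_bounded_in_prob[OF i2] conv_in_prob_imp_bounded_in_prob[OF i4]
          conv_in_prob_imp_bounded_in_prob[OF ii2]) simp_all
  qed
qed

end
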